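(* Let $m\ge 4$ be an integer. For every $f:\{0,1\}^N\to\{0,1\}$, $$C^{*,\oplus}(f\circ\mathrm{IND}_m^N)\ge \tfrac12\, C^{dt}(f)\log_2 m.$$ Furthermore, for every relation $R\subseteq\{0,1\}^N\times W$, $$C^{*,\oplus}(R\circ\mathrm{IND}_m^N)\ge\tfrac12\,C^{dt}(R)\log_2 m.$$
   Context: $\mathrm{IND}_m:[m]\times\{0,1\}^m\to\{0,1\}$, $\mathrm{IND}_m(x,y)=y_x$; $\mathrm{IND}_m^N(x,y)=(\mathrm{IND}_m(x_i,y_i))_{i\in[N]}$ for $x\in[m]^N$ (Alice's input) and $y\in(\{0,1\}^m)^N$ (Bob's input, viewed as a vector in $\mathbb{F}_2^{[N]\times[m]}$). The lifted function is $(f\circ\mathrm{IND}_m^N)(x,y)=f(\mathrm{IND}_m^N(x,y))$; the lifted relation $R\circ\mathrm{IND}_m^N$ relates $(x,y)$ to $w$ iff $(\mathrm{IND}_m^N(x,y),w)\in R$. A $( *,\oplus)$-protocol (semi-structured protocol) is a deterministic two-party communication protocol in which Alice may send arbitrary functions of her input (and the transcript so far) but each bit Bob sends is a parity $\bigoplus_{(i,j)\in S}y_{i,j}$ of his input bits, with $S$ depending on the transcript so far. $C^{*,\oplus}(F)$ is the minimum worst-case number of bits communicated by a $( *,\oplus)$-protocol computing $F$; for a relation, the protocol on input $(x,y)$ must output some $w$ related to $(x,y)$ (or $\bot$ if none exists). $C^{dt}(f)$ (resp. $C^{dt}(R)$) is the minimum height of a decision tree querying bits of $z\in\{0,1\}^N$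 that computes $f$ (resp. outputs some $w$ with $(z,w)\in R$, or $\bot$ if no such $w$ exists). *)

theory Defs
  imports Complex_Main
begin

datatype 'o dtree = DLeaf 'o | DQuery nat "'o dtree" "'o dtree"

fun dt_eval :: "'o dtree \<Rightarrow> bool list \<Rightarrow> 'o" where
  "dt_eval (DLeaf o') z = o'"
| "dt_eval (DQuery i t0 t1) z = (if z ! i then dt_eval t1 z else dt_eval t0 z)"

fun dt_height :: "'o dtree \<Rightarrow> nat" where
  "dt_height (DLeaf _) = 0"
| "dt_height (DQuery i t0 t1) = Suc (max (dt_height t0) (dt_height t1))"

fun dt_valid :: "nat \<Rightarrow> 'o dtree \<Rightarrow> bool" where
  "dt_valid N (DLeaf _) = True"
| "dt_valid N (DQuery i t0 t1) = (i < N \<and> dt_valid N t0 \<and> dt_valid N t1)"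

definition bool_inputs :: "nat \<Rightarrow> bool list set" where
  "bool_inputs N = {z. length z = N}"

definition dt_computes_fun :: "nat \<Rightarrow> (bool list \<Rightarrow> bool) \<Rightarrow> bool dtree \<Rightarrow> bool" where
  "dt_computes_fun N f t \<longleftrightarrow> dt_valid N t \<and> (\<forall>z\<in>bool_inputs N. dt_eval t z = f z)"

text \<open>Relation solving: output Some w with (z,w) in R, or None (= bottom) if no such w exists.\<close>
definition solves_rel :: "('i \<times> 'w) set \<Rightarrow> 'i \<Rightarrow> 'w option \<Rightarrow> bool" where
  "solves_rel R z r \<longleftrightarrow>
     (if \<exists>w. (z, w) \<in> R then (\<exists>w. r = Some w \<and> (z, w) \<in> R) else r = None)"

definition dt_computes_rel :: "nat \<Rightarrow> (bool list \<times> 'w) set \<Rightarrow> 'w option dtree \<Rightarrow> bool" where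
  "dt_computes_rel N R t \<longleftrightarrow> dt_valid N t \<and> (\<forall>z\<in>bool_inputs N. solves_rel R z (dt_eval t z))"

definition C_dt_fun :: "nat \<Rightarrow> (bool list \<Rightarrow> bool) \<Rightarrow> nat" where
  "C_dt_fun N f = (LEAST d. \<exists>t. dt_computes_fun N f t \<and> dt_height t = d)"

definition C_dt_rel :: "nat \<Rightarrow> (bool list \<times> 'w) set \<Rightarrow> nat" where
  "C_dt_rel N R = (LEAST d. \<exists>t. dt_computes_rel N R t \<and> dt_height t = d)"

text \<open>Alice's input x \<in> [m]^N: nat list of length N, entries in {0..<m} (0-indexed [m]).
  Bob's input y \<in> ({0,1}^m)^N: list of N bool lists of length m; y!i!j is y_{i,j}.\<close>

definition alice_inputs :: "nat \<Rightarrow> nat \<Rightarrow> nat list set" where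
  "alice_inputs m N = {x. length x = N \<and> (\<forall>i<N. x ! i < m)}"

definition bob_inputs :: "nat \<Rightarrow> nat \<Rightarrow> bool list list set" where
  "bob_inputs m N = {y. length y = N \<and> (\<forall>i<N. length (y ! i) = m)}"

definition IND :: "nat \<Rightarrow> bool list \<Rightarrow> bool" where
  "IND x y = y ! x"

definition IND_N :: "nat \<Rightarrow> nat list \<Rightarrow> bool list list \<Rightarrow> bool list" where
  "IND_N N x y = map (\<lambda>i. IND (x ! i) (y ! i)) [0..<N]"

text \<open>Each node's message may depend on the transcript so far via the node's
  position in the tree. Alice's bit is an arbitrary function of her input; Bob's bit is the
  parity of his input bits indexed by a set S \<subseteq> [N] \<times> [m].\<close>

datatype ('a, 'o) prot =
    POut 'o
  | PAlice "'a \<Rightarrow> bool" "('a, 'o) prot" "('a, 'o) prot"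
  | PBob "(nat \<times> nat) set" "('a, 'o) prot" "('a, 'o) prot"

definition parity :: "(nat \<times> nat) set \<Rightarrow> bool list list \<Rightarrow> bool" where
  "parity S y = odd (card {(i, j) \<in> S. y ! i ! j})"

fun prot_eval :: "('a, 'o) prot \<Rightarrow> 'a \<Rightarrow> bool list list \<Rightarrow> 'o" where
  "prot_eval (POut o') x y = o'"
| "prot_eval (PAlice g p0 p1) x y = (if g x then prot_eval p1 x y else prot_eval p0 x y)"
| "prot_eval (PBob S p0 p1) x y = (if parity S y then prot_eval p1 x y else prot_eval p0 x y)"

fun prot_cost :: "('a, 'o) prot \<Rightarrow> nat" where
  "prot_cost (POut _) = 0"
| "prot_cost (PAlice g p0 p1) = Suc (max (prot_cost p0) (prot_cost p1))"
| "prot_cost (PBob S p0 p1) = Suc (max (prot_cost p0) (prot_cost p1))"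

fun prot_valid :: "nat \<Rightarrow> nat \<Rightarrow> ('a, 'o) prot \<Rightarrow> bool" where
  "prot_valid m N (POut _) = True"
| "prot_valid m N (PAlice g p0 p1) = (prot_valid m N p0 \<and> prot_valid m N p1)"
| "prot_valid m N (PBob S p0 p1) =
     (S \<subseteq> {..<N} \<times> {..<m} \<and> prot_valid m N p0 \<and> prot_valid m N p1)"

definition C_xor_lift_fun :: "nat \<Rightarrow> nat \<Rightarrow> (bool list \<Rightarrow> bool) \<Rightarrow> nat" where
  "C_xor_lift_fun m N f = (LEAST c. \<exists>p :: (nat list, bool) prot.
     prot_valid m N p \<and> prot_cost p = c \<and>
     (\<forall>x\<in>alice_inputs m N. \<forall>y\<in>bob_inputs m N. prot_eval p x y = f (IND_N N x y)))"

definition C_xor_lift_rel :: "nat \<Rightarrow> nat \<Rightarrow> (bool list \<times> 'w) set \<Rightarrow> nat" where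
  "C_xor_lift_rel m N R = (LEAST c. \<exists>p :: (nat list, 'w option) prot.
     prot_valid m N p \<and> prot_cost p = c \<and>
     (\<forall>x\<in>alice_inputs m N. \<forall>y\<in>bob_inputs m N. solves_rel R (IND_N N x y) (prot_eval p x y)))"

end

theory Submission
  imports Defs "HOL-Library.FuncSet"
begin

text \<open>A semi-structured protocol is simulated by a decision tree. Alice's inputs range over a
  set \<open>X\<close> whose pointers are fixed on the queried coordinates; Bob's inputs range over the
  solutions of his answers so far, kept as an echelon system with no pivot hit by a pointer of
  \<open>X\<close>, that agree with the queried values. If some pointer value on a free coordinate is taken by
  a \<open>1/\<surd>m\<close> fraction of \<open>X\<close>, the tree queries that coordinate and restricts \<open>X\<close> to the value.
  Otherwise \<open>X\<close> is dense: an Alice bit keeps the larger half of \<open>X\<close>, and a Bob parity, reduced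
  modulo the system, either involves only queried bits or contains a free cell, which becomes a
  new pivot after discarding the at most half of \<open>X\<close> pointing to it. Hence the simulating tree
  of a subprotocol of cost \<open>c\<close> satisfies \<open>m ^ depth * (card X / m ^ free) ^ 2 \<le> 4 ^ c\<close>: a leaf
  has density at most \<open>1\<close>, a query is paid for by the density gain, and each protocol bit costs
  a factor \<open>4\<close>. At the root the density is \<open>1\<close>, so \<open>m ^ depth \<le> 4 ^ cost\<close>.\<close>

definition parity_on :: "'a set \<Rightarrow> ('a \<Rightarrow> bool) \<Rightarrow> bool" where
  "parity_on S Y \<longleftrightarrow> odd (card {v\<in>S. Y v})"

lemma parity_on_cong: "(\<And>v. v \<in> S \<Longrightarrow> Y v = Y' v) \<Longrightarrow> parity_on S Y = parity_on S Y'"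
  unfolding parity_on_def by (metis (mono_tags, lifting) Collect_cong)

lemma parity_on_remove:
  assumes "finite S" "p \<in> S"
  shows "parity_on S Y = (parity_on (S - {p}) Y \<noteq> Y p)"
proof -
  have "{v\<in>S. Y v} = (if Y p then insert p {v\<in>S - {p}. Y v} else {v\<in>S - {p}. Y v})"
    using assms(2) by auto
  then show ?thesis
    using assms(1) by (simp add: parity_on_def)
qed

lemma parity_on_symdiff:
  assumes "finite A" "finite B"
  shows "parity_on (A - B \<union> (B - A)) Y = (parity_on A Y \<noteq> parity_on B Y)"
proof -
  define A' B' where "A' = {v\<in>A. Y v}" and "B' = {v\<in>B. Y v}"
  have fin: "finite A'" "finite B'"
    using assms by (auto simp: A'_def B'_def)
  have "{v \<in> A - B \<union> (B - A). Y v} = A' - B' \<union> (B' - A')"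
    by (auto simp: A'_def B'_def)
  moreover have "card (A' - B' \<union> (B' - A')) = card (A' - B') + card (B' - A')"
    using fin by (intro card_Un_disjoint) auto
  moreover have "card A' = card (A' - B') + card (A' \<inter> B')"
    "card B' = card (B' - A') + card (A' \<inter> B')"
    using card_Int_Diff[OF fin(1), of B'] card_Int_Diff[OF fin(2), of A']
    by (simp_all add: Int_commute)
  ultimately show ?thesis
    unfolding parity_on_def A'_def[symmetric] B'_def[symmetric] by presburger
qed

text \<open>An equation \<open>(T, b, p)\<close> demands \<open>parity_on T Y = b\<close>; \<open>p\<close> is its pivot.\<close>
type_synonym 'a parity_eqn = "'a set \<times> bool \<times> 'a"

fun satisfies :: "'a parity_eqn list \<Rightarrow> ('a \<Rightarrow> bool) \<Rightarrow> bool" where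
  "satisfies [] Y = True"
| "satisfies ((T, b, _) # es) Y = (parity_on T Y = b \<and> satisfies es Y)"

fun pivots :: "'a parity_eqn list \<Rightarrow> 'a set" where
  "pivots [] = {}"
| "pivots ((_, _, p) # es) = insert p (pivots es)"

fun echelon :: "'a parity_eqn list \<Rightarrow> bool" where
  "echelon [] = True"
| "echelon ((T, _, p) # es) = (p \<in> T \<and> T \<inter> pivots es = {} \<and> echelon es)"

fun reduce :: "'a set \<Rightarrow> 'a parity_eqn list \<Rightarrow> 'a set \<times> bool" where
  "reduce S [] = (S, False)"
| "reduce S ((T, b, p) # es) = (case reduce S es of (S', c) \<Rightarrow>
     if p \<in> S' then (S' - T \<union> (T - S'), c \<noteq> b) else (S', c))"

lemma satisfies_cong:
  "(\<And>v. v \<in> \<Union>(fst ` set es) \<Longrightarrow> Y v = Y' v) \<Longrightarrow> satisfies es Y = satisfies es Y'"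
proof (induction es)
  case (Cons e es)
  then show ?case
    by (cases e) (auto intro!: parity_on_cong)
qed simp

text \<open>The first pivot is set to satisfy the first equation; solving the remaining equations only
  changes their pivots, which the first equation does not involve.\<close>
lemma echelon_solution_off_pivots:
  assumes "echelon es" "\<forall>e\<in>set es. finite (fst e)"
  shows "\<exists>Y. satisfies es Y \<and> (\<forall>v. v \<notin> pivots es \<longrightarrow> Y v = Y0 v)"
  using assms
proof (induction es arbitrary: Y0)
  case (Cons e es)
  obtain T b p where e: "e = (T, b, p)"
    by (cases e)
  have "p \<in> T" "T \<inter> pivots es = {}" "finite T"
    using Cons.prems e by auto
  define Y1 where "Y1 = Y0(p := (b \<noteq> parity_on (T - {p}) Y0))"
  have "parity_on (T - {p}) Y1 = parity_on (T - {p}) Y0"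
    unfolding Y1_def by (intro parity_on_cong) auto
  then have Y1_T: "parity_on T Y1 = b"
    using parity_on_remove[OF \<open>finite T\<close> \<open>p \<in> T\<close>, of Y1] by (auto simp: Y1_def)
  obtain Y where Y: "satisfies es Y" "\<forall>v. v \<notin> pivots es \<longrightarrow> Y v = Y1 v"
    using Cons.IH[of Y1] Cons.prems e by auto
  have "parity_on T Y = parity_on T Y1"
    using Y(2) \<open>T \<inter> pivots es = {}\<close> by (intro parity_on_cong) auto
  then show ?case
    using Y Y1_T e by (intro exI[of _ Y]) (auto simp: Y1_def)
qed auto

lemma finite_reduce:
  "finite S \<Longrightarrow> \<forall>e\<in>set es. finite (fst e) \<Longrightarrow> finite (fst (reduce S es))"
  by (induction S es rule: reduce.induct) (auto split: prod.splits)

lemma reduce_subset: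
  "S \<subseteq> B \<Longrightarrow> \<forall>e\<in>set es. fst e \<subseteq> B \<Longrightarrow> fst (reduce S es) \<subseteq> B"
  by (induction S es rule: reduce.induct) (auto split: prod.splits)

lemma reduce_disjoint_pivots: "echelon es \<Longrightarrow> fst (reduce S es) \<inter> pivots es = {}"
  by (induction S es rule: reduce.induct) (auto split: prod.splits)

lemma parity_on_reduce:
  assumes "finite S" "\<forall>e\<in>set es. finite (fst e)" "satisfies es Y"
  shows "parity_on S Y = (parity_on (fst (reduce S es)) Y \<noteq> snd (reduce S es))"
  using assms
proof (induction S es rule: reduce.induct)
  case (2 S T b p es)
  obtain S' c where r: "reduce S es = (S', c)"
    by (cases "reduce S es")
  have "finite S'" "finite T"
    using finite_reduce[of S es] 2 r by auto
  then show ?case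
    using 2 r parity_on_symdiff[of S' T Y] by auto
qed simp

definition bob_matrix :: "bool list list \<Rightarrow> nat \<times> nat \<Rightarrow> bool" where
  "bob_matrix y = (\<lambda>(i, j). y ! i ! j)"

lemma parity_eq_parity_on: "parity S y = parity_on S (bob_matrix y)"
proof -
  have "{(i, j). (i, j) \<in> S \<and> y ! i ! j} = {v\<in>S. bob_matrix y v}"
    by (auto simp: bob_matrix_def)
  then show ?thesis
    by (simp add: parity_def parity_on_def)
qed

lemma alice_inputs_eq_lists: "alice_inputs m N = {xs. set xs \<subseteq> {..<m} \<and> length xs = N}"
  by (auto simp: alice_inputs_def in_set_conv_nth) (meson lessThan_iff nth_mem subsetD)

lemma finite_alice_inputs: "finite (alice_inputs m N)"
  unfolding alice_inputs_eq_lists by (rule finite_lists_length_eq) simp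

lemma card_alice_inputs: "card (alice_inputs m N) = m ^ N"
  unfolding alice_inputs_eq_lists by (simp add: card_lists_length_eq)

lemma card_le_power_free_coords:
  assumes "X \<subseteq> alice_inputs m N" "\<forall>x\<in>X. \<forall>i\<in>Q. x ! i = a i"
  shows "card X \<le> m ^ card ({..<N} - Q)"
proof -
  let ?F = "{..<N} - Q"
  let ?free = "\<lambda>x. restrict (\<lambda>i. x ! i) ?F"
  have "inj_on ?free X"
  proof
    fix x x' assume xx': "x \<in> X" "x' \<in> X" "?free x = ?free x'"
    then have "length x = N" "length x' = N"
      using assms(1) by (auto simp: alice_inputs_def)
    moreover have "x ! i = x' ! i" if "i < N" for i
    proof (cases "i \<in> Q")
      case False
      then show ?thesis
        using that fun_cong[OF xx'(3), of i] by simp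
    qed (use xx' assms(2) in auto)
    ultimately show "x = x'"
      by (simp add: nth_equalityI)
  qed
  moreover have "?free ` X \<subseteq> PiE ?F (\<lambda>_. {..<m})"
  proof (rule image_subsetI)
    fix x assume "x \<in> X"
    then show "?free x \<in> PiE ?F (\<lambda>_. {..<m})"
      using assms(1) by (simp add: alice_inputs_def restrict_PiE_iff subset_iff)
  qed
  ultimately have "card X \<le> card (PiE ?F (\<lambda>_. {..<m}))"
    by (simp add: card_inj_on_le finite_PiE)
  then show ?thesis
    by (simp add: card_PiE)
qed

fun bob_reveals :: "(nat \<times> nat) list \<Rightarrow> (bool list \<Rightarrow> 'o) \<Rightarrow> ('a, 'o) prot" where
  "bob_reveals [] out = POut (out [])"
| "bob_reveals (v # vs) out =
     PBob {v} (bob_reveals vs (\<lambda>bs. out (False # bs))) (bob_reveals vs (\<lambda>bs. out (True # bs)))"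

fun alice_selects :: "'a list \<Rightarrow> ('a \<Rightarrow> ('a, 'o) prot) \<Rightarrow> ('a, 'o) prot \<Rightarrow> ('a, 'o) prot" where
  "alice_selects [] P d = d"
| "alice_selects (x' # xs) P d = PAlice (\<lambda>x. x = x') (alice_selects xs P d) (P x')"

lemma parity_singleton: "parity {(i, j)} y = y ! i ! j"
proof -
  have "{(a, b). (a, b) \<in> {(i, j)} \<and> y ! a ! b} = (if y ! i ! j then {(i, j)} else {})"
    by auto
  then show ?thesis
    by (simp add: parity_def)
qed

lemma prot_eval_bob_reveals:
  "prot_eval (bob_reveals vs out) x y = out (map (\<lambda>(i, j). y ! i ! j) vs)"
  by (induction vs arbitrary: out) (auto simp: parity_singleton)

lemma prot_valid_bob_reveals: "set vs \<subseteq> {..<N} \<times> {..<m} \<Longrightarrow> prot_valid m N (bob_reveals vs out)"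
  by (induction vs arbitrary: out) auto

lemma prot_eval_alice_selects:
  "x \<in> set xs \<Longrightarrow> prot_eval (alice_selects xs P d) x y = prot_eval (P x) x y"
  by (induction xs) auto

lemma prot_valid_alice_selects:
  "\<forall>x\<in>set xs. prot_valid m N (P x) \<Longrightarrow> prot_valid m N d \<Longrightarrow> prot_valid m N (alice_selects xs P d)"
  by (induction xs) auto

context
  fixes m N :: nat
begin

definition sim_state ::
    "nat list set \<Rightarrow> nat set \<Rightarrow> (nat \<Rightarrow> nat) \<Rightarrow> (nat \<times> nat) parity_eqn list \<Rightarrow> bool" where
  "sim_state X Q a es \<longleftrightarrow> X \<subseteq> alice_inputs m N \<and> X \<noteq> {} \<and> Q \<subseteq> {..<N} \<and>
     (\<forall>x\<in>X. \<forall>i\<in>Q. x ! i = a i) \<and>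
     echelon es \<and> (\<forall>e\<in>set es. fst e \<subseteq> {..<N} \<times> {..<m}) \<and>
     (\<forall>x\<in>X. \<forall>i. (i, x ! i) \<notin> pivots es)"

definition bob_region ::
    "nat set \<Rightarrow> (nat \<Rightarrow> nat) \<Rightarrow> (nat \<Rightarrow> bool) \<Rightarrow> (nat \<times> nat) parity_eqn list \<Rightarrow> bool list list set"
  where
  "bob_region Q a \<rho> es =
     {y \<in> bob_inputs m N. satisfies es (bob_matrix y) \<and> (\<forall>i\<in>Q. y ! i ! a i = \<rho> i)}"

definition dense :: "nat list set \<Rightarrow> nat set \<Rightarrow> bool" where
  "dense X Q \<longleftrightarrow> (\<forall>i<N. i \<notin> Q \<longrightarrow> (\<forall>c. card {x\<in>X. x ! i = c} ^ 2 * m < card X ^ 2))"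

lemma sim_state_finite: "sim_state X Q a es \<Longrightarrow> finite X"
  unfolding sim_state_def using finite_alice_inputs finite_subset by blast

lemma sim_state_card_pos: "sim_state X Q a es \<Longrightarrow> 0 < card X"
  using sim_state_finite by (auto simp: sim_state_def card_gt_0_iff)

lemma sim_state_finite_eqns: "sim_state X Q a es \<Longrightarrow> \<forall>e\<in>set es. finite (fst e)"
  unfolding sim_state_def by (meson finite_SigmaI finite_lessThan finite_subset)

lemma sim_state_subset: "sim_state X Q a es \<Longrightarrow> X' \<subseteq> X \<Longrightarrow> X' \<noteq> {} \<Longrightarrow> sim_state X' Q a es"
  unfolding sim_state_def by blast

lemma sim_state_fix_coord:
  assumes "sim_state X Q a es" "i < N" "{x\<in>X. x ! i = c} \<noteq> {}"
  shows "sim_state {x\<in>X. x ! i = c} (insert i Q) (a(i := c)) es"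
  using assms by (auto simp: sim_state_def)

lemma sim_state_add_eqn:
  assumes "sim_state X Q a es" "{x\<in>X. x ! i \<noteq> j} \<noteq> {}"
    and "(i, j) \<in> T" "T \<subseteq> {..<N} \<times> {..<m}" "T \<inter> pivots es = {}"
  shows "sim_state {x\<in>X. x ! i \<noteq> j} Q a ((T, b, (i, j)) # es)"
  using assms by (auto simp: sim_state_def)

lemma bob_region_fix_coord:
  "i \<notin> Q \<Longrightarrow> bob_region (insert i Q) (a(i := c)) (\<rho>(i := b)) es \<subseteq> bob_region Q a \<rho> es"
  by (auto simp: bob_region_def)

text \<open>No pointer of \<open>x\<close> hits a pivot, so the bits it points to can be set to \<open>z\<close> before
  the pivots are solved for.\<close>
lemma IND_N_onto_consistent:
  assumes state: "sim_state X Q a es" and z: "length z = N" "\<forall>i\<in>Q. z ! i = \<rho> i"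
  shows "\<exists>x\<in>X. \<exists>y\<in>bob_region Q a \<rho> es. IND_N N x y = z"
proof -
  obtain x where "x \<in> X"
    using state by (auto simp: sim_state_def)
  then have x: "\<forall>i<N. x ! i < m" "\<forall>i. (i, x ! i) \<notin> pivots es" "\<forall>i\<in>Q. x ! i = a i"
    using state unfolding sim_state_def alice_inputs_def by blast+
  have "echelon es"
    using state by (simp add: sim_state_def)
  then obtain Y where Y: "satisfies es Y"
    "\<forall>v. v \<notin> pivots es \<longrightarrow> Y v = (case v of (i, j) \<Rightarrow> j = x ! i \<and> z ! i)"
    using echelon_solution_off_pivots sim_state_finite_eqns[OF state] by blast
  define y where "y = map (\<lambda>i. map (\<lambda>j. Y (i, j)) [0..<m]) [0..<N]"
  have y_Y: "y ! i ! j = Y (i, j)" if "i < N" "j < m" for i j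
    using that by (simp add: y_def)
  have y_x: "y ! i ! (x ! i) = z ! i" if "i < N" for i
    using that x(1,2) y_Y Y(2) by simp
  have "satisfies es (bob_matrix y) = satisfies es Y"
  proof (rule satisfies_cong)
    fix v assume "v \<in> \<Union>(fst ` set es)"
    then have "v \<in> {..<N} \<times> {..<m}"
      using state unfolding sim_state_def by blast
    then show "bob_matrix y v = Y v"
      using y_Y by (auto simp: bob_matrix_def)
  qed
  moreover have "y \<in> bob_inputs m N"
    by (simp add: bob_inputs_def y_def)
  moreover have "y ! i ! a i = \<rho> i" if "i \<in> Q" for i
  proof -
    have "i < N"
      using that state by (auto simp: sim_state_def)
    then show ?thesis
      using that x(3) y_x z(2) by metis
  qed
  ultimately have "y \<in> bob_region Q a \<rho> es"
    using Y(1) by (simp add: bob_region_def)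
  moreover have "IND_N N x y = z"
    using y_x z(1) by (intro nth_equalityI) (auto simp: IND_N_def IND_def)
  ultimately show ?thesis
    using \<open>x \<in> X\<close> by blast
qed

text \<open>A free cell \<open>(i, j)\<close> can be made a pivot at the price of at most half of \<open>X\<close>: on a free
  coordinate density bounds the share of \<open>j\<close> by \<open>1/\<surd>m \<le> 1/2\<close>.\<close>
lemma card_le_twice_avoiding_cell:
  assumes "4 \<le> m" "sim_state X Q a es" "dense X Q" "i < N" "\<not> (i \<in> Q \<and> j = a i)"
  shows "card X \<le> 2 * card {x\<in>X. x ! i \<noteq> j}"
proof (cases "i \<in> Q")
  case True
  then have "{x\<in>X. x ! i \<noteq> j} = X"
    using assms(2,5) by (auto simp: sim_state_def)
  then show ?thesis
    by simp
next
  case False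
  define k where "k = card {x\<in>X. x ! i = j}"
  have "(2 * k) ^ 2 \<le> k ^ 2 * m"
    using assms(1) by (simp add: power_mult_distrib)
  also have "\<dots> < card X ^ 2"
    using assms(3,4) False by (auto simp: dense_def k_def)
  finally have "2 * k < card X"
    by (rule power_less_imp_less_base) simp
  moreover have "card {x\<in>X. x ! i \<noteq> j} = card X - k"
  proof -
    have "{x\<in>X. x ! i \<noteq> j} = X - {x\<in>X. x ! i = j}"
      by auto
    then show ?thesis
      using sim_state_finite[OF assms(2)] by (simp add: card_Diff_subset k_def)
  qed
  ultimately show ?thesis
    by linarith
qed

lemma parity_via_reduce:
  assumes "sim_state X Q a es" "finite S" "y \<in> bob_region Q a \<rho> es"
  shows "parity S y = (parity_on (fst (reduce S es)) (bob_matrix y) \<noteq> snd (reduce S es))"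
  using assms parity_on_reduce[OF _ sim_state_finite_eqns]
  by (simp add: parity_eq_parity_on bob_region_def)

lemma parity_determined_on_region:
  assumes "sim_state X Q a es" "finite S" "y \<in> bob_region Q a \<rho> es"
    and fixed: "\<forall>(i, j) \<in> fst (reduce S es). i \<in> Q \<and> j = a i"
  shows "parity S y = (parity_on (fst (reduce S es)) (\<lambda>(i, _). \<rho> i) \<noteq> snd (reduce S es))"
proof -
  have "parity_on (fst (reduce S es)) (bob_matrix y) = parity_on (fst (reduce S es)) (\<lambda>(i, _). \<rho> i)"
    using fixed assms(3) by (intro parity_on_cong) (auto simp: bob_region_def bob_matrix_def)
  then show ?thesis
    using parity_via_reduce[OF assms(1-3)] by simp
qed

context
  fixes ok :: "bool list \<Rightarrow> 'o \<Rightarrow> bool"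
begin

definition dt_correct_on :: "nat set \<Rightarrow> (nat \<Rightarrow> bool) \<Rightarrow> 'o dtree \<Rightarrow> bool" where
  "dt_correct_on Q \<rho> t \<longleftrightarrow>
     dt_valid N t \<and> (\<forall>z. length z = N \<longrightarrow> (\<forall>i\<in>Q. z ! i = \<rho> i) \<longrightarrow> ok z (dt_eval t z))"

definition prot_correct_on :: "(nat list, 'o) prot \<Rightarrow> nat list set \<Rightarrow> bool list list set \<Rightarrow> bool" where
  "prot_correct_on p X Y \<longleftrightarrow> (\<forall>x\<in>X. \<forall>y\<in>Y. ok (IND_N N x y) (prot_eval p x y))"

definition simulated :: "nat set \<Rightarrow> (nat \<Rightarrow> bool) \<Rightarrow> nat list set \<Rightarrow> nat \<Rightarrow> bool" where
  "simulated Q \<rho> X c \<longleftrightarrow> (\<exists>t. dt_correct_on Q \<rho> t \<and>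
     m ^ dt_height t * card X ^ 2 \<le> 4 ^ c * m ^ (2 * card ({..<N} - Q)))"

definition simulable :: "(nat list, 'o) prot \<Rightarrow> bool" where
  "simulable p \<longleftrightarrow> (\<forall>X Q a \<rho> es. sim_state X Q a es \<longrightarrow>
     prot_correct_on p X (bob_region Q a \<rho> es) \<longrightarrow> simulated Q \<rho> X (prot_cost p))"

lemma prot_correct_on_subset:
  "prot_correct_on p X Y \<Longrightarrow> X' \<subseteq> X \<Longrightarrow> Y' \<subseteq> Y \<Longrightarrow> prot_correct_on p X' Y'"
  unfolding prot_correct_on_def by blast

lemma simulated_POut:
  assumes state: "sim_state X Q a es"
    and correct: "prot_correct_on (POut r) X (bob_region Q a \<rho> es)"
  shows "simulated Q \<rho> X 0"
proof -
  have "dt_correct_on Q \<rho> (DLeaf r)"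
    unfolding dt_correct_on_def
  proof (intro conjI allI impI)
    fix z :: "bool list" assume "length z = N" "\<forall>i\<in>Q. z ! i = \<rho> i"
    then obtain x y where "x \<in> X" "y \<in> bob_region Q a \<rho> es" "IND_N N x y = z"
      using IND_N_onto_consistent[OF state] by blast
    then show "ok z (dt_eval (DLeaf r) z)"
      using correct unfolding prot_correct_on_def by force
  qed simp
  moreover have "card X \<le> m ^ card ({..<N} - Q)"
    using state by (intro card_le_power_free_coords) (auto simp: sim_state_def)
  then have "card X ^ 2 \<le> (m ^ card ({..<N} - Q)) ^ 2"
    by (rule power_mono) simp
  then have "card X ^ 2 \<le> m ^ (2 * card ({..<N} - Q))"
    by (simp add: power_mult[symmetric] mult.commute)
  ultimately show ?thesis
    unfolding simulated_def by (intro exI[of _ "DLeaf r"]) simp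
qed

lemma simulated_shrink:
  assumes "card X \<le> 2 * card X'" "c \<le> c'" "simulated Q \<rho> X' c"
  shows "simulated Q \<rho> X (Suc c')"
proof -
  define F where "F = card ({..<N} - Q)"
  obtain t where t: "dt_correct_on Q \<rho> t"
    and bound: "m ^ dt_height t * card X' ^ 2 \<le> 4 ^ c * m ^ (2 * F)"
    using assms(3) by (auto simp: simulated_def F_def)
  have "m ^ dt_height t * card X ^ 2 \<le> m ^ dt_height t * (2 * card X') ^ 2"
    using assms(1) by (intro mult_left_mono power_mono) auto
  also have "\<dots> = 4 * (m ^ dt_height t * card X' ^ 2)"
    by (simp add: power_mult_distrib)
  also have "\<dots> \<le> 4 * (4 ^ c * m ^ (2 * F))"
    using bound by simp
  also have "\<dots> \<le> 4 * (4 ^ c' * m ^ (2 * F))"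
    using assms(2) by (intro mult_left_mono mult_right_mono power_increasing) auto
  finally show ?thesis
    using t by (auto simp: simulated_def F_def)
qed

lemma dt_correct_on_DQuery:
  assumes "i < N" "dt_correct_on (insert i Q) (\<rho>(i := False)) t0"
    "dt_correct_on (insert i Q) (\<rho>(i := True)) t1"
  shows "dt_correct_on Q \<rho> (DQuery i t0 t1)"
  unfolding dt_correct_on_def
proof (intro conjI allI impI)
  show "dt_valid N (DQuery i t0 t1)"
    using assms by (simp add: dt_correct_on_def)
  fix z :: "bool list" assume z: "length z = N" "\<forall>j\<in>Q. z ! j = \<rho> j"
  then have "\<forall>j\<in>insert i Q. z ! j = (\<rho>(i := z ! i)) j"
    by simp
  then show "ok z (dt_eval (DQuery i t0 t1) z)"
    using assms(2,3) z(1) unfolding dt_correct_on_def by (cases "z ! i") auto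
qed

lemma simulated_query:
  assumes "i < N" "i \<notin> Q" "card X ^ 2 \<le> card X' ^ 2 * m"
    and sub: "\<And>b. simulated (insert i Q) (\<rho>(i := b)) X' c"
  shows "simulated Q \<rho> X c"
proof -
  define F where "F = card ({..<N} - insert i Q)"
  have "{..<N} - insert i Q = {..<N} - Q - {i}" "i \<in> {..<N} - Q"
    using assms(1,2) by auto
  then have F: "card ({..<N} - Q) = Suc F"
    unfolding F_def by (metis card_Suc_Diff1 finite_Diff finite_lessThan)
  obtain t0 t1 where t0: "dt_correct_on (insert i Q) (\<rho>(i := False)) t0"
    and t1: "dt_correct_on (insert i Q) (\<rho>(i := True)) t1"
    and bounds: "m ^ dt_height t0 * card X' ^ 2 \<le> 4 ^ c * m ^ (2 * F)"
      "m ^ dt_height t1 * card X' ^ 2 \<le> 4 ^ c * m ^ (2 * F)"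
    using sub[of False] sub[of True] by (auto simp: simulated_def F_def)
  define h where "h = max (dt_height t0) (dt_height t1)"
  have bound: "m ^ h * card X' ^ 2 \<le> 4 ^ c * m ^ (2 * F)"
    using bounds by (simp add: h_def max_def)
  have "m ^ Suc h * card X ^ 2 \<le> m ^ Suc h * (card X' ^ 2 * m)"
    using assms(3) by (rule mult_left_mono) simp
  also have "\<dots> = m * m * (m ^ h * card X' ^ 2)"
    by (simp add: algebra_simps)
  also have "\<dots> \<le> m * m * (4 ^ c * m ^ (2 * F))"
    using bound by (rule mult_left_mono) simp
  also have "\<dots> = 4 ^ c * m ^ (2 * Suc F)"
    by (simp add: algebra_simps power_add)
  finally have "m ^ dt_height (DQuery i t0 t1) * card X ^ 2 \<le> 4 ^ c * m ^ (2 * card ({..<N} - Q))"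
    by (simp only: F h_def dt_height.simps)
  then show ?thesis
    using dt_correct_on_DQuery[OF assms(1) t0 t1] unfolding simulated_def by blast
qed

text \<open>A coordinate on which some pointer value is heavy is queried; the potential pays for it.\<close>
lemma simulable_if_dense:
  assumes dense_case: "\<And>X Q a \<rho> es. sim_state X Q a es \<Longrightarrow> dense X Q \<Longrightarrow>
      prot_correct_on p X (bob_region Q a \<rho> es) \<Longrightarrow> simulated Q \<rho> X (prot_cost p)"
  shows "simulable p"
  unfolding simulable_def
proof (intro allI impI)
  fix X Q a \<rho> es
  assume "sim_state X Q a es" "prot_correct_on p X (bob_region Q a \<rho> es)"
  then show "simulated Q \<rho> X (prot_cost p)"
  proof (induction "card ({..<N} - Q)" arbitrary: X Q a \<rho> rule: less_induct)
    case less
    show ?case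
    proof (cases "dense X Q")
      case True
      then show ?thesis
        using less.prems dense_case by blast
    next
      case False
      then obtain i c where i: "i < N" "i \<notin> Q"
        and heavy: "card X ^ 2 \<le> card {x\<in>X. x ! i = c} ^ 2 * m"
        by (auto simp: dense_def not_less)
      define X' where "X' = {x\<in>X. x ! i = c}"
      have heavy': "card X ^ 2 \<le> card X' ^ 2 * m"
        using heavy by (simp add: X'_def)
      then have "X' \<noteq> {}"
        using sim_state_card_pos[OF less.prems(1)] by auto
      then have state': "sim_state X' (insert i Q) (a(i := c)) es"
        using sim_state_fix_coord[OF less.prems(1) i(1)] by (simp add: X'_def)
      have smaller: "card ({..<N} - insert i Q) < card ({..<N} - Q)"
        using i by (intro psubset_card_mono) auto
      have "prot_correct_on p X' (bob_region (insert i Q) (a(i := c)) (\<rho>(i := b)) es)" for b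
        using prot_correct_on_subset[OF less.prems(2) _ bob_region_fix_coord[OF i(2)]]
        by (simp add: X'_def)
      then have "simulated (insert i Q) (\<rho>(i := b)) X' (prot_cost p)" for b
        using less.hyps[OF smaller state'] by blast
      then show ?thesis
        using simulated_query[OF i heavy'] by blast
    qed
  qed
qed

lemma simulated_by_branch:
  assumes "simulable p" "sim_state X' Q a es" "prot_correct_on p X' (bob_region Q a \<rho> es)"
    and "card X \<le> 2 * card X'" "prot_cost p \<le> c"
  shows "simulated Q \<rho> X (Suc c)"
  using assms simulated_shrink unfolding simulable_def by blast

lemma simulable_PAlice:
  assumes "simulable p0" "simulable p1"
  shows "simulable (PAlice g p0 p1)"
  unfolding simulable_def
proof (intro allI impI)
  fix X Q a \<rho> es
  assume state: "sim_state X Q a es"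
    and correct: "prot_correct_on (PAlice g p0 p1) X (bob_region Q a \<rho> es)"
  have "card X = card ({x\<in>X. g x} \<union> {x\<in>X. \<not> g x})"
    by (rule arg_cong[where f = card]) auto
  also have "\<dots> = card {x\<in>X. g x} + card {x\<in>X. \<not> g x}"
    using sim_state_finite[OF state] by (intro card_Un_disjoint) auto
  finally consider "card X \<le> 2 * card {x\<in>X. g x}" | "card X \<le> 2 * card {x\<in>X. \<not> g x}"
    by linarith
  then obtain b where half: "card X \<le> 2 * card {x\<in>X. g x = b}"
  proof cases
    case 1
    then show ?thesis
      using that[of True] by simp
  next
    case 2
    then show ?thesis
      using that[of False] by simp
  qed
  then have "0 < card {x\<in>X. g x = b}"
    using sim_state_card_pos[OF state] by linarith
  then have "{x\<in>X. g x = b} \<noteq> {}"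
    using card_gt_0_iff by blast
  then have "sim_state {x\<in>X. g x = b} Q a es"
    by (intro sim_state_subset[OF state]) auto
  moreover have "prot_correct_on (if b then p1 else p0) {x\<in>X. g x = b} (bob_region Q a \<rho> es)"
    using correct by (auto simp: prot_correct_on_def)
  moreover have "simulable (if b then p1 else p0)"
    using assms by simp
  ultimately show "simulated Q \<rho> X (prot_cost (PAlice g p0 p1))"
    using simulated_by_branch[OF _ _ _ half] by simp
qed

lemma simulable_PBob:
  assumes "4 \<le> m" "S \<subseteq> {..<N} \<times> {..<m}" "simulable p0" "simulable p1"
  shows "simulable (PBob S p0 p1)"
proof (rule simulable_if_dense)
  fix X Q a \<rho> es
  assume state: "sim_state X Q a es" and "dense X Q"
    and correct: "prot_correct_on (PBob S p0 p1) X (bob_region Q a \<rho> es)"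
  have "finite S"
    using assms(2) finite_subset by blast
  obtain S' c where r: "reduce S es = (S', c)"
    by fastforce
  have S': "S' \<subseteq> {..<N} \<times> {..<m}" "S' \<inter> pivots es = {}"
    using reduce_subset[OF assms(2), of es] reduce_disjoint_pivots[of es S] state r
    by (auto simp: sim_state_def)
  show "simulated Q \<rho> X (prot_cost (PBob S p0 p1))"
  proof (cases "\<forall>(i, j) \<in> S'. i \<in> Q \<and> j = a i")
    case True
    define \<beta> where "\<beta> = (parity_on S' (\<lambda>(i, _). \<rho> i) \<noteq> c)"
    have "parity S y = \<beta>" if "y \<in> bob_region Q a \<rho> es" for y
      using parity_determined_on_region[OF state \<open>finite S\<close> that] True r by (simp add: \<beta>_def)
    then have "prot_correct_on (if \<beta> then p1 else p0) X (bob_region Q a \<rho> es)"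
      using correct by (auto simp: prot_correct_on_def)
    then show ?thesis
      using simulated_by_branch[OF _ state] assms(3,4) by (cases \<beta>) auto
  next
    case False
    then obtain i j where ij: "(i, j) \<in> S'" "\<not> (i \<in> Q \<and> j = a i)"
      by auto
    define X' where "X' = {x\<in>X. x ! i \<noteq> j}"
    define es' where "es' = (S', c, (i, j)) # es"
    have half: "card X \<le> 2 * card X'"
      using card_le_twice_avoiding_cell[OF assms(1) state \<open>dense X Q\<close> _ ij(2)] ij(1) S'(1)
      by (auto simp: X'_def)
    then have "X' \<noteq> {}"
      using sim_state_card_pos[OF state] by auto
    then have "sim_state X' Q a es'"
      using sim_state_add_eqn[OF state _ ij(1) S'] by (simp add: X'_def es'_def)
    moreover have "\<not> parity S y" "y \<in> bob_region Q a \<rho> es" if "y \<in> bob_region Q a \<rho> es'" for y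
      using that parity_via_reduce[OF state \<open>finite S\<close>, of y] r
      by (auto simp: bob_region_def es'_def)
    then have "prot_correct_on p0 X' (bob_region Q a \<rho> es')"
      using correct unfolding prot_correct_on_def X'_def by fastforce
    ultimately show ?thesis
      using simulated_by_branch[OF assms(3) _ _ half] by simp
  qed
qed

lemma simulable_if_valid: "4 \<le> m \<Longrightarrow> prot_valid m N p \<Longrightarrow> simulable p"
proof (induction p)
  case (POut r)
  then show ?case
    using simulated_POut by (auto simp: simulable_def)
qed (auto intro: simulable_PAlice simulable_PBob)

text \<open>Alice names her input, then Bob reveals the bits it points to.\<close>
lemma exists_correct_protocol:
  assumes "\<forall>z. \<exists>r. ok z r"
  shows "\<exists>p. prot_valid m N p \<and> prot_correct_on p (alice_inputs m N) (bob_inputs m N)"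
proof -
  define out where "out z = (SOME r. ok z r)" for z
  have ok_out: "ok z (out z)" for z
    unfolding out_def using assms by (metis someI_ex)
  obtain xs where xs: "set xs = alice_inputs m N"
    using finite_list[OF finite_alice_inputs] by blast
  define P :: "nat list \<Rightarrow> (nat list, 'o) prot"
    where "P x = bob_reveals (map (\<lambda>i. (i, x ! i)) [0..<N]) out" for x
  define p where "p = alice_selects xs P (POut (out []))"
  have "prot_valid m N p"
    unfolding p_def P_def using xs
    by (intro prot_valid_alice_selects prot_valid_bob_reveals ballI) (auto simp: alice_inputs_def)
  moreover have "prot_eval p x y = out (IND_N N x y)" if "x \<in> alice_inputs m N" for x y
    using that xs
    by (simp add: p_def P_def prot_eval_alice_selects prot_eval_bob_reveals
        IND_N_def IND_def comp_def)
  ultimately show ?thesis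
    using ok_out by (auto simp: prot_correct_on_def)
qed

lemma dt_from_protocol:
  assumes "4 \<le> m" "prot_valid m N p" "prot_correct_on p (alice_inputs m N) (bob_inputs m N)"
  shows "\<exists>t. dt_valid N t \<and> (\<forall>z\<in>bool_inputs N. ok z (dt_eval t z)) \<and>
    m ^ dt_height t \<le> 4 ^ prot_cost p"
proof -
  have "replicate N 0 \<in> alice_inputs m N"
    using assms(1) by (simp add: alice_inputs_def)
  then have "sim_state (alice_inputs m N) {} (\<lambda>_. 0) []"
    by (auto simp: sim_state_def)
  moreover have "bob_region {} (\<lambda>_. 0) (\<lambda>_. False) [] = bob_inputs m N"
    by (simp add: bob_region_def)
  ultimately have "simulated {} (\<lambda>_. False) (alice_inputs m N) (prot_cost p)"
    using simulable_if_valid[OF assms(1,2)] assms(3) by (simp add: simulable_def)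
  then obtain t where t: "dt_correct_on {} (\<lambda>_. False) t"
    and "m ^ dt_height t * (m ^ N) ^ 2 \<le> 4 ^ prot_cost p * (m ^ N) ^ 2"
    by (auto simp: simulated_def card_alice_inputs power_mult[symmetric] mult.commute)
  then have "m ^ dt_height t \<le> 4 ^ prot_cost p"
    using assms(1) by simp
  with t show ?thesis
    by (auto simp: dt_correct_on_def bool_inputs_def)
qed

lemma dt_from_cheapest_protocol:
  assumes "4 \<le> m" "\<forall>z. \<exists>r. ok z r"
  shows "\<exists>t. dt_valid N t \<and> (\<forall>z\<in>bool_inputs N. ok z (dt_eval t z)) \<and>
    m ^ dt_height t \<le> 4 ^ (LEAST c. \<exists>p. prot_valid m N p \<and> prot_cost p = c \<and>
      prot_correct_on p (alice_inputs m N) (bob_inputs m N))"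
    (is "\<exists>t. _ \<and> _ \<and> _ \<le> 4 ^ Least ?cost")
proof -
  obtain p0 where "prot_valid m N p0" "prot_correct_on p0 (alice_inputs m N) (bob_inputs m N)"
    using exists_correct_protocol[OF assms(2)] by blast
  then have "?cost (prot_cost p0)"
    by blast
  then have "?cost (Least ?cost)"
    by (rule LeastI)
  then obtain p where p: "prot_valid m N p" "prot_correct_on p (alice_inputs m N) (bob_inputs m N)"
    and "prot_cost p = Least ?cost"
    by blast
  then show ?thesis
    using dt_from_protocol[OF assms(1) p] by simp
qed

end

end

lemma log_bound_of_power_bound:
  assumes "0 < m" "D \<le> h" "m ^ h \<le> (4::nat) ^ C"
  shows "1/2 * real D * log 2 (real m) \<le> real C"
proof -
  have real_bound: "real m ^ h \<le> 4 ^ C"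
    using assms(3) by (metis of_nat_le_iff of_nat_numeral of_nat_power)
  have "real D * log 2 (real m) \<le> real h * log 2 (real m)"
    using assms(1,2) by (intro mult_right_mono) auto
  also have "\<dots> = log 2 (real m ^ h)"
    using assms(1) by (simp add: log_nat_power)
  also have "\<dots> \<le> log 2 (4 ^ C)"
    using assms(1) real_bound by (intro log_mono) auto
  also have "\<dots> = 2 * real C"
    by (simp add: log_nat_power log_pow_cancel[of 2 2, simplified])
  finally show ?thesis
    by simp
qed

theorem theorem15:
  fixes m N :: nat and f :: "bool list \<Rightarrow> bool" and R :: "(bool list \<times> 'w) set"
  assumes "m \<ge> 4"
  shows "real (C_xor_lift_fun m N f) \<ge> 1/2 * real (C_dt_fun N f) * log 2 (real m) \<and>
         real (C_xor_lift_rel m N R) \<ge> 1/2 * real (C_dt_rel N R) * log 2 (real m)"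
proof
  obtain t where t: "dt_computes_fun N f t" "m ^ dt_height t \<le> 4 ^ C_xor_lift_fun m N f"
    using dt_from_cheapest_protocol[OF assms, where N = N and ok = "\<lambda>z r. r = f z"]
    by (auto simp: C_xor_lift_fun_def dt_computes_fun_def prot_correct_on_def)
  then have "C_dt_fun N f \<le> dt_height t"
    unfolding C_dt_fun_def by (blast intro: Least_le)
  with t(2) show "real (C_xor_lift_fun m N f) \<ge> 1/2 * real (C_dt_fun N f) * log 2 (real m)"
    using assms by (intro log_bound_of_power_bound) auto
next
  have "\<forall>z. \<exists>r. solves_rel R z r"
    by (auto simp: solves_rel_def)
  from dt_from_cheapest_protocol[OF assms this, where N = N]
  obtain t where t: "dt_computes_rel N R t" "m ^ dt_height t \<le> 4 ^ C_xor_lift_rel m N R"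
    by (auto simp: C_xor_lift_rel_def dt_computes_rel_def prot_correct_on_def)
  then have "C_dt_rel N R \<le> dt_height t"
    unfolding C_dt_rel_def by (blast intro: Least_le)
  with t(2) show "real (C_xor_lift_rel m N R) \<ge> 1/2 * real (C_dt_rel N R) * log 2 (real m)"
    using assms by (intro log_bound_of_power_bound) auto
qed

end
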